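(* Let $n\ge1$, let $L_1,\dots,L_N$ be complex $n\times n$ matrices, let $\pi_1,\dots,\pi_n$ be mutually orthogonal rank-one orthogonal projectors on $\mathbb{C}^n$, let $w_{jk}:=\sum_{\alpha=1}^N \mathrm{Tr}(\pi_j L_\alpha\pi_k L_\alpha^\dagger)$ for $j\neq k$, and let $\Omega$ be the matrix with $\Omega_{jk}=w_{jk}$ ($j\ne k$) and $\Omega_{kk}=-\sum_{l\ne k}w_{lk}$. Let $N_1,\dots,N_{n_B}$ be the vertex sets of the basins of $G_\Omega$, $N_B=\bigcup_\eta N_\eta$, and let $G'_\Omega$ be the graph obtained from $G_\Omega$ by removing every edge whose two endpoints lie in the same basin. Then the kernel of $\Omega^T$ is spanned by the linearly independent vectors $$\kappa'_\eta := \Big(\sum_{\tau\in T_B(G'_\Omega)} W(\tau)\Big)\sum_{j\in N_\eta} e_j + \sum_{l\notin N_B}\ \sum_{\tau\in T_B(G'_\Omega,\eta,l)} W(\tau)\, e_l,\qquad \eta=1,\dots,n_B.$$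
   Context: $G_\Omega$ is the directed graph on $\{1,\dots,n\}$ with a directed edge from $k$ to $j$ of weight $w_{jk}$ for each $j\ne k$ with $w_{jk}\ne0$. A basin is a strongly connected component with no edge leaving it. $e_j$ is the $j$-th standard basis vector. For a digraph $G$ on $\{1,\dots,n\}$, $T_B(G)$ is the set of spanning forests of $G$ whose set of roots is exactly $N_B$: subgraphs containing all $n$ vertices, with no directed cycles, in which every vertex of $N_B$ has no outgoing edge and every vertex outside $N_B$ has exactly one outgoing edge. $T_B(G,\eta,l)$ is the set of forests in $T_B(G)$ in which vertex $l$ lies in a tree rooted at a vertex of $N_\eta$. $W(\tau)$ is the product of the edge weights of $\tau$, with $W(\tau)=1$ if $\tau$ has no edges. *)

theory Defs
  imports "HOL-Analysis.Analysis"
begin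

definition cnj_transpose :: "complex^'n^'m \<Rightarrow> complex^'m^'n" where
  "cnj_transpose A = (\<chi> i j. cnj (A $ j $ i))"

definition rank_one_orth_proj :: "complex^'n^'n \<Rightarrow> bool" where
  "rank_one_orth_proj P \<longleftrightarrow> P ** P = P \<and> cnj_transpose P = P \<and> rank P = 1"

text \<open>Weighted digraph on the vertex type 'n given by a weight function wt,
  where wt j k is the weight of the edge from k to j (present iff j \<noteq> k and wt j k \<noteq> 0).\<close>
definition wedges :: "('n \<Rightarrow> 'n \<Rightarrow> complex) \<Rightarrow> ('n \<times> 'n) set" where
  "wedges wt = {(k, j). j \<noteq> k \<and> wt j k \<noteq> 0}"

definition strongly_connected_component :: "('n \<times> 'n) set \<Rightarrow> 'n set \<Rightarrow> bool" where
  "strongly_connected_component E C \<longleftrightarrow>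
     C \<noteq> {} \<and> (\<forall>x\<in>C. \<forall>y\<in>C. (x, y) \<in> E\<^sup>*) \<and>
     (\<forall>x\<in>C. \<forall>y. (x, y) \<in> E\<^sup>* \<and> (y, x) \<in> E\<^sup>* \<longrightarrow> y \<in> C)"

definition is_basin :: "('n \<times> 'n) set \<Rightarrow> 'n set \<Rightarrow> bool" where
  "is_basin E C \<longleftrightarrow> strongly_connected_component E C \<and> (\<forall>x\<in>C. \<forall>y. (x, y) \<in> E \<longrightarrow> y \<in> C)"

definition basins :: "('n \<times> 'n) set \<Rightarrow> 'n set set" where
  "basins E = {C. is_basin E C}"

definition remove_basin_edges :: "('n \<Rightarrow> 'n \<Rightarrow> complex) \<Rightarrow> ('n \<Rightarrow> 'n \<Rightarrow> complex)" where
  "remove_basin_edges wt = (\<lambda>j k. if \<exists>C\<in>basins (wedges wt). j \<in> C \<and> k \<in> C then 0 else wt j k)"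

definition spanning_forests :: "('n \<times> 'n) set \<Rightarrow> 'n set \<Rightarrow> ('n \<times> 'n) set set" where
  "spanning_forests E R = {F. F \<subseteq> E \<and> acyclic F \<and>
      (\<forall>x\<in>R. \<forall>y. (x, y) \<notin> F) \<and> (\<forall>x. x \<notin> R \<longrightarrow> (\<exists>!y. (x, y) \<in> F))}"

definition spanning_forests_to :: "('n \<times> 'n) set \<Rightarrow> 'n set \<Rightarrow> 'n set \<Rightarrow> 'n \<Rightarrow> ('n \<times> 'n) set set" where
  "spanning_forests_to E R Neta l = {F \<in> spanning_forests E R. \<exists>r\<in>Neta. (l, r) \<in> F\<^sup>*}"

definition forest_weight :: "('n \<Rightarrow> 'n \<Rightarrow> complex) \<Rightarrow> ('n \<times> 'n) set \<Rightarrow> complex" where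
  "forest_weight wt F = (\<Prod>(k, j)\<in>F. wt j k)"

end

theory Submission
  imports Defs
begin

text \<open>Every \<open>w\<^sub>j\<^sub>k\<close> is a squared Frobenius norm \<open>\<parallel>\<pi>\<^sub>j L\<^sub>\<alpha> \<pi>\<^sub>k\<parallel>\<^sup>2\<close>, hence real and nonnegative, and
  \<open>\<Omega>\<^sup>T x = 0\<close> says that \<open>x\<close> is harmonic: \<open>\<Sum>\<^sub>j w\<^sub>j\<^sub>k (x\<^sub>j - x\<^sub>k) = 0\<close> at every vertex \<open>k\<close>.
  By the maximum principle (applied to real and imaginary parts) a harmonic vector is constant on
  every basin and vanishes if it vanishes on \<open>N\<^sub>B\<close>, since every vertex reaches a basin.
  Conversely each \<open>\<kappa>'\<^sub>\<eta>\<close> is harmonic: on a basin it is constant, and at a vertex \<open>k\<close> outside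
  the basins, deleting the edge out of \<open>k\<close> identifies the forests rooted in \<open>N\<^sub>B\<close> with forests
  rooted in \<open>N\<^sub>B \<union> {k}\<close> plus one edge out of \<open>k\<close>, which makes harmonicity at \<open>k\<close> an
  algebraic identity. On the basins \<open>\<kappa>'\<^sub>\<eta>\<close> is the total weight of \<open>T\<^sub>B(G')\<close> times the indicator of
  \<open>N\<^sub>\<eta>\<close>, and this total weight is positive, so the \<open>\<kappa>'\<^sub>\<eta>\<close> are independent and span the
  kernel.\<close>

section \<open>Spanning forests with a given root set\<close>

lemma spanning_forests_single_valued: "F \<in> spanning_forests E R \<Longrightarrow> single_valued F"
  unfolding spanning_forests_def single_valued_def by blast

lemma spanning_forests_root_rtrancl:
  assumes "F \<in> spanning_forests E R" "r \<in> R" "(r, y) \<in> F\<^sup>*"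
  shows "y = r"
  using assms(3) assms(1,2) unfolding spanning_forests_def by (auto elim: converse_rtranclE)

lemma spanning_forests_reach_root:
  fixes F :: "('n::finite \<times> 'n) set"
  assumes F: "F \<in> spanning_forests E R"
  obtains r where "r \<in> R" "(x, r) \<in> F\<^sup>*"
proof -
  have "wf (F\<inverse>)"
    using F by (intro finite_acyclic_wf) (auto simp: spanning_forests_def)
  then obtain z where z: "(x, z) \<in> F\<^sup>*" and stuck: "\<And>y. (z, y) \<in> F \<Longrightarrow> (x, y) \<notin> F\<^sup>*"
    using wf_eq_minimal[of "F\<inverse>"] by blast
  have "z \<in> R"
  proof (rule ccontr)
    assume "z \<notin> R"
    then obtain y where "(z, y) \<in> F" using F unfolding spanning_forests_def by blast
    then show False using stuck z by (meson rtrancl_into_rtrancl)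
  qed
  then show thesis using z by (rule that)
qed

lemma spanning_forests_root_unique:
  assumes F: "F \<in> spanning_forests E R" and "r1 \<in> R" "r2 \<in> R" "(x, r1) \<in> F\<^sup>*" "(x, r2) \<in> F\<^sup>*"
  shows "r1 = r2"
proof -
  have "(r1, r2) \<in> F\<^sup>* \<or> (r2, r1) \<in> F\<^sup>*"
    using single_valued_confluent[OF spanning_forests_single_valued[OF F] assms(4,5)] .
  then show ?thesis using spanning_forests_root_rtrancl[OF F] assms(2,3) by auto
qed

lemma spanning_forests_of_decreasing_successor:
  fixes d :: "'n \<Rightarrow> nat"
  assumes "\<And>x. x \<notin> R \<Longrightarrow> (x, succ x) \<in> E" "\<And>x. x \<notin> R \<Longrightarrow> d (succ x) < d x"
  shows "{(x, succ x) | x. x \<notin> R} \<in> spanning_forests E R"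
proof -
  define F where "F = {(x, succ x) | x. x \<notin> R}"
  have "F\<inverse> \<subseteq> inv_image less_than d" using assms(2) unfolding F_def by auto
  then have "wf (F\<inverse>)" by (rule wf_subset[OF wf_inv_image[OF wf_less_than]])
  then have "acyclic (F\<inverse>)" by (rule wf_acyclic)
  then have "acyclic F" by (simp only: acyclic_converse)
  moreover have "F \<subseteq> E" using assms(1) unfolding F_def by auto
  moreover have "(x, y) \<notin> F" if "x \<in> R" for x y using that unfolding F_def by simp
  moreover have "\<exists>!y. (x, y) \<in> F" if "x \<notin> R" for x using that unfolding F_def by simp
  ultimately show ?thesis unfolding spanning_forests_def F_def by blast
qed

text \<open>Every vertex outside \<open>R\<close> has an edge that shortens its distance to \<open>R\<close>.\<close>
lemma spanning_forests_nonempty: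
  fixes E :: "('n::finite \<times> 'n) set"
  assumes reach: "\<And>x. \<exists>r\<in>R. (x, r) \<in> E\<^sup>*"
  shows "spanning_forests E R \<noteq> {}"
proof -
  define d where "d x = (LEAST n. \<exists>r\<in>R. (x, r) \<in> E ^^ n)" for x
  have d: "\<exists>r\<in>R. (x, r) \<in> E ^^ d x" for x
  proof -
    obtain r where "r \<in> R" "(x, r) \<in> E\<^sup>*" using reach[of x] by auto
    then obtain n where "(x, r) \<in> E ^^ n" using rtrancl_imp_relpow by metis
    then have "\<exists>n. \<exists>r\<in>R. (x, r) \<in> E ^^ n" using \<open>r \<in> R\<close> by auto
    then show ?thesis unfolding d_def by (rule LeastI_ex)
  qed
  have "\<exists>y. (x, y) \<in> E \<and> d y < d x" if x: "x \<notin> R" for x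
  proof -
    obtain r where r: "r \<in> R" "(x, r) \<in> E ^^ d x" using d by auto
    have "d x \<noteq> 0"
    proof
      assume "d x = 0"
      then have "x = r" using r(2) by simp
      then show False using x r(1) by simp
    qed
    then obtain m where m: "d x = Suc m" using not0_implies_Suc by blast
    have "(x, r) \<in> E ^^ Suc m" using r(2) unfolding m .
    then obtain y where y: "(x, y) \<in> E" "(y, r) \<in> E ^^ m" by (blast dest: relpow_Suc_D2)
    have "d y \<le> m" unfolding d_def by (rule Least_le) (use r(1) y(2) in blast)
    then show ?thesis using y(1) m by (intro exI[of _ y]) simp
  qed
  then have "\<forall>x. \<exists>y. x \<notin> R \<longrightarrow> (x, y) \<in> E \<and> d y < d x" by blast
  then obtain succ where succ: "\<forall>x. x \<notin> R \<longrightarrow> (x, succ x) \<in> E \<and> d (succ x) < d x"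
    by (rule exE[OF choice])
  then have "{(x, succ x) | x. x \<notin> R} \<in> spanning_forests E R"
    by (intro spanning_forests_of_decreasing_successor[of R succ E d]) auto
  then show ?thesis by blast
qed

lemma spanning_forests_insert_root:
  fixes g :: "('n::finite \<times> 'n) set"
  assumes k: "k \<notin> R" and g: "g \<in> spanning_forests E (insert k R)"
    and kj: "(k, j) \<in> E" and j: "r \<in> R" "(j, r) \<in> g\<^sup>*"
  shows "insert (k, j) g \<in> spanning_forests E R"
proof -
  have "(j, k) \<notin> g\<^sup>*"
    using spanning_forests_root_unique[OF g, of k r j] j k by blast
  then have "acyclic (insert (k, j) g)"
    using g unfolding spanning_forests_def acyclic_insert by blast
  moreover have "\<exists>!y. (x, y) \<in> insert (k, j) g" if "x \<notin> R" for x
    using g that unfolding spanning_forests_def by (cases "x = k") auto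
  ultimately show ?thesis
    using g k kj unfolding spanning_forests_def by blast
qed

lemma spanning_forests_remove_root:
  fixes F :: "('n::finite \<times> 'n) set"
  assumes k: "k \<notin> R" and F: "F \<in> spanning_forests E R"
  obtains j g r where "F = insert (k, j) g" "g \<in> spanning_forests E (insert k R)"
    "(k, j) \<in> E" "r \<in> R" "(j, r) \<in> g\<^sup>*"
proof -
  obtain j where j: "(k, j) \<in> F" "\<And>y. (k, y) \<in> F \<Longrightarrow> y = j"
    using F k unfolding spanning_forests_def by blast
  define g where "g = F - {(k, j)}"
  have Fg: "F = insert (k, j) g" using j(1) unfolding g_def by blast
  have FE: "F \<subseteq> E" and "acyclic F" and roots: "\<And>x y. x \<in> R \<Longrightarrow> (x, y) \<notin> F"
    and succ: "\<And>x. x \<notin> R \<Longrightarrow> \<exists>!y. (x, y) \<in> F"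
    using F unfolding spanning_forests_def by blast+
  have "acyclic g" by (rule acyclic_subset[OF \<open>acyclic F\<close>]) (auto simp: g_def)
  moreover have "g \<subseteq> E" using FE unfolding g_def by blast
  moreover have "(x, y) \<notin> g" if "x \<in> insert k R" for x y
    using that roots j(2) unfolding g_def by blast
  moreover have "\<exists>!y. (x, y) \<in> g" if "x \<notin> insert k R" for x
    using that succ[of x] unfolding g_def by auto
  ultimately have g: "g \<in> spanning_forests E (insert k R)"
    unfolding spanning_forests_def by blast
  have jk: "(j, k) \<notin> g\<^sup>*" using F unfolding Fg spanning_forests_def acyclic_insert by blast
  obtain r where r: "r \<in> insert k R" "(j, r) \<in> g\<^sup>*" using spanning_forests_reach_root[OF g] .
  have "r \<noteq> k" using jk r(2) by auto
  then have "r \<in> R" using r(1) by simp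
  moreover have "(k, j) \<in> E" using F j(1) unfolding spanning_forests_def by blast
  ultimately show thesis using Fg g r(2) by (intro that)
qed

lemma bij_betw_insert_root_edge:
  fixes E :: "('n::finite \<times> 'n) set"
  assumes k: "k \<notin> R"
  shows "bij_betw (\<lambda>(g, j). insert (k, j) g)
    (SIGMA g:spanning_forests E (insert k R). {j. (k, j) \<in> E \<and> (\<exists>r\<in>R. (j, r) \<in> g\<^sup>*)})
    (spanning_forests E R)"
  (is "bij_betw ?f ?S _")
proof -
  have no_k: "(k, y) \<notin> g" if "g \<in> spanning_forests E (insert k R)" for g y
    using that unfolding spanning_forests_def by blast
  have "inj_on ?f ?S"
  proof (rule inj_onI, clarsimp)
    fix g1 j1 g2 j2
    assume "g1 \<in> spanning_forests E (insert k R)" "g2 \<in> spanning_forests E (insert k R)"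
      and eq: "insert (k, j1) g1 = insert (k, j2) g2"
    then have "g1 = insert (k, j1) g1 - {k} \<times> UNIV" "g2 = insert (k, j2) g2 - {k} \<times> UNIV"
      using no_k by blast+
    with eq show "g1 = g2 \<and> j1 = j2" by auto
  qed
  moreover have "?f ` ?S = spanning_forests E R"
  proof
    show "?f ` ?S \<subseteq> spanning_forests E R"
      by (auto intro: spanning_forests_insert_root[OF k])
    show "spanning_forests E R \<subseteq> ?f ` ?S"
    proof
      fix F assume "F \<in> spanning_forests E R"
      then obtain j g r where "F = insert (k, j) g" "g \<in> spanning_forests E (insert k R)"
        "(k, j) \<in> E" "r \<in> R" "(j, r) \<in> g\<^sup>*"
        by (rule spanning_forests_remove_root[OF k])
      then show "F \<in> ?f ` ?S" by (intro image_eqI[of _ _ "(g, j)"]) auto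
    qed
  qed
  ultimately show ?thesis unfolding bij_betw_def by blast
qed

lemma sum_spanning_forests_remove_root:
  fixes h :: "('n::finite \<times> 'n) set \<Rightarrow> 'a::comm_monoid_add"
  assumes k: "k \<notin> R"
  shows "(\<Sum>F\<in>spanning_forests E R. h F) =
    (\<Sum>g\<in>spanning_forests E (insert k R).
       \<Sum>j\<in>{j. (k, j) \<in> E \<and> (\<exists>r\<in>R. (j, r) \<in> g\<^sup>*)}. h (insert (k, j) g))"
proof -
  have "(\<Sum>F\<in>spanning_forests E R. h F) =
    (\<Sum>(g, j)\<in>(SIGMA g:spanning_forests E (insert k R). {j. (k, j) \<in> E \<and> (\<exists>r\<in>R. (j, r) \<in> g\<^sup>*)}).
      h (insert (k, j) g))"
    by (simp add: sum.reindex_bij_betw[OF bij_betw_insert_root_edge[OF k], symmetric] case_prod_unfold)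
  then show ?thesis by (simp add: sum.Sigma)
qed

lemma reach_roots_insert_root:
  fixes g :: "('n::finite \<times> 'n) set"
  assumes k: "k \<notin> R" and g: "g \<in> spanning_forests E (insert k R)" and N: "N \<subseteq> R"
  shows "(\<exists>r\<in>N. (i, r) \<in> (insert (k, j) g)\<^sup>*) \<longleftrightarrow>
    (\<exists>r\<in>N. (if \<exists>r\<in>R. (i, r) \<in> g\<^sup>* then i else j, r) \<in> g\<^sup>*)"
proof (cases "\<exists>r\<in>R. (i, r) \<in> g\<^sup>*")
  case True
  then have "(i, k) \<notin> g\<^sup>*" using spanning_forests_root_unique[OF g, of k _ i] k by blast
  then show ?thesis using True unfolding rtrancl_insert by auto
next
  case False
  obtain r where "r \<in> insert k R" "(i, r) \<in> g\<^sup>*" using spanning_forests_reach_root[OF g] .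
  then have "(i, k) \<in> g\<^sup>*" using False by auto
  then show ?thesis using False N unfolding rtrancl_insert by auto
qed

section \<open>Harmonic vectors\<close>

text \<open>\<open>harmonic_at wt x k\<close> is the \<open>k\<close>-th equation of \<open>\<Omega>\<^sup>T x = 0\<close>, where \<open>\<Omega>\<close> has off-diagonal
  entries \<open>wt\<close> and zero column sums.\<close>
definition harmonic_at :: "('n::finite \<Rightarrow> 'n \<Rightarrow> 'a::comm_ring) \<Rightarrow> ('n \<Rightarrow> 'a) \<Rightarrow> 'n \<Rightarrow> bool" where
  "harmonic_at wt x k \<longleftrightarrow> (\<Sum>j\<in>UNIV - {k}. wt j k * (x j - x k)) = 0"

lemma harmonic_at_const: "harmonic_at wt (\<lambda>_. c) k"
  unfolding harmonic_at_def by simp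

lemma harmonic_at_add:
  assumes "harmonic_at wt x k" "harmonic_at wt y k"
  shows "harmonic_at wt (\<lambda>i. x i + y i) k"
proof -
  have "(\<Sum>j\<in>UNIV - {k}. wt j k * (x j + y j - (x k + y k)))
      = (\<Sum>j\<in>UNIV - {k}. wt j k * (x j - x k)) + (\<Sum>j\<in>UNIV - {k}. wt j k * (y j - y k))"
    by (simp add: distrib_left right_diff_distrib flip: sum.distrib) (simp add: algebra_simps)
  then show ?thesis using assms unfolding harmonic_at_def by simp
qed

lemma harmonic_at_scale:
  assumes "harmonic_at wt x k"
  shows "harmonic_at wt (\<lambda>i. c * x i) k"
proof -
  have "(\<Sum>j\<in>UNIV - {k}. wt j k * (c * x j - c * x k)) = c * (\<Sum>j\<in>UNIV - {k}. wt j k * (x j - x k))"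
    by (simp add: algebra_simps sum_distrib_left)
  then show ?thesis using assms unfolding harmonic_at_def by simp
qed

lemma harmonic_at_sum:
  assumes "finite G" "\<And>g. g \<in> G \<Longrightarrow> harmonic_at wt (h g) k"
  shows "harmonic_at wt (\<lambda>i. \<Sum>g\<in>G. c g * h g i) k"
  using assms
proof (induction G rule: finite_induct)
  case empty
  then show ?case using harmonic_at_const[of wt 0 k] by simp
next
  case (insert g G)
  then show ?case by (simp add: harmonic_at_add harmonic_at_scale)
qed

lemma harmonic_at_cong:
  assumes "\<And>j. j \<noteq> k \<Longrightarrow> wt j k = wt' j k"
  shows "harmonic_at wt x k \<longleftrightarrow> harmonic_at wt' x k"
proof -
  have "(\<Sum>j\<in>UNIV - {k}. wt j k * (x j - x k)) = (\<Sum>j\<in>UNIV - {k}. wt' j k * (x j - x k))"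
    using assms by (intro sum.cong) auto
  then show ?thesis unfolding harmonic_at_def by simp
qed

lemma harmonic_at_of_real_Re:
  assumes "harmonic_at (\<lambda>j k. complex_of_real (r j k)) x k"
  shows "harmonic_at r (\<lambda>j. Re (x j)) k"
proof -
  have "(\<Sum>j\<in>UNIV - {k}. r j k * (Re (x j) - Re (x k)))
      = Re (\<Sum>j\<in>UNIV - {k}. of_real (r j k) * (x j - x k))"
    by (simp add: Re_sum)
  then show ?thesis using assms unfolding harmonic_at_def by simp
qed

lemma harmonic_at_of_real_Im:
  assumes "harmonic_at (\<lambda>j k. complex_of_real (r j k)) x k"
  shows "harmonic_at r (\<lambda>j. Im (x j)) k"
proof -
  have "(\<Sum>j\<in>UNIV - {k}. r j k * (Im (x j) - Im (x k)))
      = Im (\<Sum>j\<in>UNIV - {k}. of_real (r j k) * (x j - x k))"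
    by (simp add: Im_sum)
  then show ?thesis using assms unfolding harmonic_at_def by simp
qed

lemma subspace_harmonic: "vec.subspace {x :: 'a::field^'n. \<forall>k. harmonic_at wt (($) x) k}"
  unfolding vec.subspace_def
proof (intro conjI allI impI; clarsimp)
  show "harmonic_at wt (($) 0) k" for k
    unfolding harmonic_at_def by simp
  show "harmonic_at wt (($) (x + y)) k"
    if "\<forall>k. harmonic_at wt (($) x) k" "\<forall>k. harmonic_at wt (($) y) k" for x y :: "'a^'n" and k
  proof -
    have "($) (x + y) = (\<lambda>i. x $ i + y $ i)" by (rule ext) simp
    then show ?thesis using harmonic_at_add[of wt "($) x" k "($) y"] that by simp
  qed
  show "harmonic_at wt (($) (c *s x)) k" if "\<forall>k. harmonic_at wt (($) x) k" for c and x :: "'a^'n" and k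
  proof -
    have "($) (c *s x) = (\<lambda>i. c * x $ i)" by (rule ext) simp
    then show ?thesis using harmonic_at_scale[of wt "($) x" k c] that by simp
  qed
qed

lemma transpose_generator_mult_eq_0_iff:
  fixes w :: "'n::finite \<Rightarrow> 'n \<Rightarrow> 'a::comm_ring_1"
  assumes "\<Omega> = (\<chi> j k. if j = k then - (\<Sum>l\<in>UNIV - {k}. w l k) else w j k)"
  shows "transpose \<Omega> *v x = 0 \<longleftrightarrow> (\<forall>k. harmonic_at w (($) x) k)"
proof -
  have "(transpose \<Omega> *v x) $ k = (\<Sum>j\<in>UNIV - {k}. w j k * (x $ j - x $ k))" for k
  proof -
    have "(transpose \<Omega> *v x) $ k
        = - (\<Sum>l\<in>UNIV - {k}. w l k) * x $ k + (\<Sum>j\<in>UNIV - {k}. w j k * x $ j)"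
      unfolding assms matrix_vector_mult_def transpose_def
      by (subst sum.remove[of UNIV k]) (auto intro!: sum.cong)
    then show ?thesis by (simp add: right_diff_distrib sum_subtractf sum_distrib_right)
  qed
  then show ?thesis unfolding harmonic_at_def vec_eq_iff by simp
qed

section \<open>Forest weights\<close>

definition forest_weight_to :: "('n \<Rightarrow> 'n \<Rightarrow> complex) \<Rightarrow> 'n set \<Rightarrow> 'n set \<Rightarrow> 'n \<Rightarrow> complex" where
  "forest_weight_to wt R N i = (\<Sum>F\<in>spanning_forests_to (wedges wt) R N i. forest_weight wt F)"

lemma forest_weight_to_eq_sum_of_bool:
  fixes wt :: "'n::finite \<Rightarrow> 'n \<Rightarrow> complex"
  shows "forest_weight_to wt R N i =
    (\<Sum>F\<in>spanning_forests (wedges wt) R. forest_weight wt F * of_bool (\<exists>r\<in>N. (i, r) \<in> F\<^sup>*))"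
  unfolding forest_weight_to_def spanning_forests_to_def
  by (simp add: sum.inter_filter of_bool_def if_distrib cong: if_cong)

lemma forest_weight_to_root:
  fixes wt :: "'n::finite \<Rightarrow> 'n \<Rightarrow> complex"
  assumes "i \<in> R"
  shows "forest_weight_to wt R N i =
    (if i \<in> N then \<Sum>F\<in>spanning_forests (wedges wt) R. forest_weight wt F else 0)"
proof -
  have "(\<exists>r\<in>N. (i, r) \<in> F\<^sup>*) \<longleftrightarrow> i \<in> N" if "F \<in> spanning_forests (wedges wt) R" for F
    using spanning_forests_root_rtrancl[OF that assms] by blast
  then show ?thesis
    unfolding forest_weight_to_eq_sum_of_bool by (cases "i \<in> N") (simp_all cong: sum.cong)
qed

text \<open>The forest weights seen from a vertex \<open>k\<close> outside the roots: the edge out of \<open>k\<close> leads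
  into the part \<open>A\<close> of a forest rooted in \<open>insert k R\<close> that hangs below \<open>R\<close>, and a vertex \<open>i\<close>
  outside \<open>A\<close> inherits its root from the endpoint of that edge.\<close>
lemma forest_weight_to_remove_root:
  fixes wt :: "'n::finite \<Rightarrow> 'n \<Rightarrow> complex"
  assumes N: "N \<subseteq> R" and k: "k \<notin> R"
  shows "forest_weight_to wt R N i =
    (\<Sum>g\<in>spanning_forests (wedges wt) (insert k R). forest_weight wt g *
      (\<Sum>j\<in>{j. \<exists>r\<in>R. (j, r) \<in> g\<^sup>*}.
         wt j k * of_bool (\<exists>r\<in>N. (if \<exists>r\<in>R. (i, r) \<in> g\<^sup>* then i else j, r) \<in> g\<^sup>*)))"
  (is "_ = (\<Sum>g\<in>?G. forest_weight wt g * (\<Sum>j\<in>?A g. wt j k * ?\<phi> g j))")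
proof -
  have "forest_weight_to wt R N i = (\<Sum>g\<in>?G. \<Sum>j\<in>{j. (k, j) \<in> wedges wt \<and> j \<in> ?A g}.
      forest_weight wt (insert (k, j) g) * of_bool (\<exists>r\<in>N. (i, r) \<in> (insert (k, j) g)\<^sup>*))"
    unfolding forest_weight_to_eq_sum_of_bool mem_Collect_eq
    by (rule sum_spanning_forests_remove_root[OF k])
  also have "\<dots> = (\<Sum>g\<in>?G. forest_weight wt g * (\<Sum>j\<in>?A g. wt j k * ?\<phi> g j))"
  proof (rule sum.cong[OF refl])
    fix g assume g: "g \<in> ?G"
    have "(k, j) \<notin> g" for j using g unfolding spanning_forests_def by blast
    then have weight: "forest_weight wt (insert (k, j) g) = wt j k * forest_weight wt g" for j
      unfolding forest_weight_def by simp
    have "k \<notin> ?A g" using spanning_forests_root_rtrancl[OF g insertI1] k by blast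
    then have "wt j k = 0" if "j \<in> ?A g" "(k, j) \<notin> wedges wt" for j
      using that unfolding wedges_def by auto
    then have restrict: "(\<Sum>j\<in>{j. (k, j) \<in> wedges wt \<and> j \<in> ?A g}. wt j k * ?\<phi> g j)
        = (\<Sum>j\<in>?A g. wt j k * ?\<phi> g j)"
      by (intro sum.mono_neutral_left) auto
    have "(\<Sum>j\<in>{j. (k, j) \<in> wedges wt \<and> j \<in> ?A g}.
        forest_weight wt (insert (k, j) g) * of_bool (\<exists>r\<in>N. (i, r) \<in> (insert (k, j) g)\<^sup>*))
        = (\<Sum>j\<in>{j. (k, j) \<in> wedges wt \<and> j \<in> ?A g}. forest_weight wt g * (wt j k * ?\<phi> g j))"
      by (rule sum.cong[OF refl]) (simp only: weight reach_roots_insert_root[OF k g N] mult_ac)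
    also have "\<dots> = forest_weight wt g * (\<Sum>j\<in>?A g. wt j k * ?\<phi> g j)"
      by (simp only: restrict flip: sum_distrib_left)
    finally show "(\<Sum>j\<in>{j. (k, j) \<in> wedges wt \<and> j \<in> ?A g}.
        forest_weight wt (insert (k, j) g) * of_bool (\<exists>r\<in>N. (i, r) \<in> (insert (k, j) g)\<^sup>*))
        = forest_weight wt g * (\<Sum>j\<in>?A g. wt j k * ?\<phi> g j)" .
  qed
  finally show ?thesis .
qed

text \<open>Off \<open>{j. P j}\<close> the function below is the \<open>wt(-, k)\<close>-weighted sum of \<open>\<phi>\<close> over
  \<open>{j. P j}\<close>, on it the function is \<open>\<phi>\<close> times the total weight, so the two contributions to the
  equation at \<open>k\<close> cancel.\<close>
lemma harmonic_at_weighted_mean: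
  fixes wt :: "'n::finite \<Rightarrow> 'n \<Rightarrow> 'a::comm_ring"
  assumes k: "\<not> P k"
  shows "harmonic_at wt (\<lambda>i. \<Sum>j | P j. wt j k * \<phi> (if P i then i else j)) k"
proof -
  define S where "S = (\<Sum>j | P j. wt j k)"
  define T where "T = (\<Sum>j | P j. wt j k * \<phi> j)"
  define h where "h i = (\<Sum>j | P j. wt j k * \<phi> (if P i then i else j))" for i
  have h: "h i = (if P i then S * \<phi> i else T)" for i
    unfolding h_def S_def T_def by (simp add: sum_distrib_right)
  have "(\<Sum>j\<in>UNIV - {k}. wt j k * (h j - h k)) = (\<Sum>j | P j. wt j k * (S * \<phi> j - T))"
    using k by (intro sum.mono_neutral_cong_right) (auto simp: h)
  also have "\<dots> = S * (\<Sum>j | P j. wt j k * \<phi> j) - (\<Sum>j | P j. wt j k) * T"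
    by (simp add: right_diff_distrib sum_subtractf sum_distrib_left sum_distrib_right mult_ac)
  also have "\<dots> = 0"
    unfolding S_def T_def by simp
  finally show ?thesis unfolding harmonic_at_def h_def .
qed

lemma forest_weight_to_harmonic:
  fixes wt :: "'n::finite \<Rightarrow> 'n \<Rightarrow> complex"
  assumes N: "N \<subseteq> R" and k: "k \<notin> R"
  shows "harmonic_at wt (forest_weight_to wt R N) k"
proof -
  let ?G = "spanning_forests (wedges wt) (insert k R)"
  have inner: "harmonic_at wt (\<lambda>i. \<Sum>j | \<exists>r\<in>R. (j, r) \<in> g\<^sup>*.
      wt j k * of_bool (\<exists>r\<in>N. (if \<exists>r\<in>R. (i, r) \<in> g\<^sup>* then i else j, r) \<in> g\<^sup>*)) k"
    if "g \<in> ?G" for g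
    using spanning_forests_root_rtrancl[OF that insertI1] k
    by (intro harmonic_at_weighted_mean[where \<phi> = "\<lambda>x. of_bool (\<exists>r\<in>N. (x, r) \<in> g\<^sup>*)"]) blast
  have "harmonic_at wt (\<lambda>i. \<Sum>g\<in>?G. forest_weight wt g *
      (\<Sum>j | \<exists>r\<in>R. (j, r) \<in> g\<^sup>*.
         wt j k * of_bool (\<exists>r\<in>N. (if \<exists>r\<in>R. (i, r) \<in> g\<^sup>* then i else j, r) \<in> g\<^sup>*))) k"
    using inner by (rule harmonic_at_sum[OF finite_class.finite])
  then show ?thesis unfolding forest_weight_to_remove_root[OF N k, abs_def] .
qed

section \<open>Basins\<close>

lemma basin_closed:
  assumes C: "C \<in> basins E" and "x \<in> C" "(x, y) \<in> E\<^sup>*"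
  shows "y \<in> C"
  using assms(3)
proof (induction rule: rtrancl_induct)
  case (step y z)
  then show ?case using C unfolding basins_def is_basin_def by blast
qed (use assms(2) in simp)

lemma basin_connected: "C \<in> basins E \<Longrightarrow> x \<in> C \<Longrightarrow> y \<in> C \<Longrightarrow> (x, y) \<in> E\<^sup>*"
  unfolding basins_def is_basin_def strongly_connected_component_def by blast

lemma basin_nonempty: "C \<in> basins E \<Longrightarrow> C \<noteq> {}"
  unfolding basins_def is_basin_def strongly_connected_component_def by blast

lemma basins_disjoint:
  assumes "C1 \<in> basins E" "C2 \<in> basins E" "x \<in> C1" "x \<in> C2"
  shows "C1 = C2"
proof -
  have "y \<in> D2" if "D1 \<in> basins E" "D2 \<in> basins E" "x \<in> D1" "x \<in> D2" "y \<in> D1" for D1 D2 y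
  proof -
    have "(x, y) \<in> E\<^sup>*" "(y, x) \<in> E\<^sup>*"
      using basin_connected[OF that(1)] that(3,5) by simp_all
    then show ?thesis using that(2,4)
      unfolding basins_def is_basin_def strongly_connected_component_def by blast
  qed
  then show ?thesis using assms by blast
qed

lemma sum_basins_indicator:
  fixes E :: "('n::finite \<times> 'n) set" and f :: "'n set \<Rightarrow> 'a::semiring_0"
  assumes "C0 \<in> basins E" "i \<in> C0"
  shows "(\<Sum>C\<in>basins E. f C * (if i \<in> C then c else 0)) = f C0 * c"
proof -
  have "(\<Sum>C\<in>basins E. f C * (if i \<in> C then c else 0)) = (\<Sum>C\<in>basins E. if C = C0 then f C * c else 0)"
  proof (rule sum.cong[OF refl])
    fix C assume "C \<in> basins E"
    then have "i \<in> C \<longleftrightarrow> C = C0" using basins_disjoint[OF _ assms(1) _ assms(2)] assms(2) by blast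
    then show "f C * (if i \<in> C then c else 0) = (if C = C0 then f C * c else 0)" by simp
  qed
  also have "\<dots> = f C0 * c" using assms(1) by simp
  finally show ?thesis .
qed

text \<open>A vertex \<open>z\<close> reachable from \<open>x\<close> with the fewest reachable vertices can be reached back
  from each of them, so those vertices form a basin.\<close>
lemma reaches_basin:
  fixes E :: "('n::finite \<times> 'n) set"
  obtains b where "b \<in> \<Union>(basins E)" "(x, b) \<in> E\<^sup>*"
proof -
  define reach where "reach y = {z. (y, z) \<in> E\<^sup>*}" for y
  obtain z where z: "(x, z) \<in> E\<^sup>*"
    and least: "\<And>y. (x, y) \<in> E\<^sup>* \<Longrightarrow> card (reach z) \<le> card (reach y)"
    using ex_has_least_nat[of "\<lambda>z. (x, z) \<in> E\<^sup>*" x "\<lambda>y. card (reach y)"] by auto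
  have same: "reach y = reach z" if "y \<in> reach z" for y
  proof -
    have "reach y \<subseteq> reach z"
      using that rtrancl_trans[of z y E] unfolding reach_def by blast
    moreover have "(x, y) \<in> E\<^sup>*" using rtrancl_trans[OF z] that unfolding reach_def by simp
    then have "card (reach z) \<le> card (reach y)" by (rule least)
    ultimately show ?thesis
      using card_mono[of "reach z" "reach y"] card_subset_eq[of "reach z" "reach y"] by simp
  qed
  have "z \<in> reach z" unfolding reach_def by simp
  moreover have "is_basin E (reach z)"
    unfolding is_basin_def strongly_connected_component_def
  proof (intro conjI ballI allI impI)
    show "reach z \<noteq> {}" using \<open>z \<in> reach z\<close> by blast
  next
    fix a b assume "a \<in> reach z" "b \<in> reach z"
    then show "(a, b) \<in> E\<^sup>*" using same unfolding reach_def by blast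
  next
    fix a y assume "a \<in> reach z" "(a, y) \<in> E\<^sup>* \<and> (y, a) \<in> E\<^sup>*"
    then show "y \<in> reach z" using same unfolding reach_def by blast
  next
    fix a y assume "a \<in> reach z" "(a, y) \<in> E"
    then show "y \<in> reach z" using same unfolding reach_def by blast
  qed
  ultimately have "z \<in> \<Union>(basins E)" unfolding basins_def by blast
  then show thesis using z by (rule that)
qed

lemma remove_basin_edges_outside:
  "k \<notin> \<Union>(basins (wedges wt)) \<Longrightarrow> remove_basin_edges wt j k = wt j k"
  unfolding remove_basin_edges_def by auto

lemma remove_basin_edges_inside:
  assumes "k \<in> \<Union>(basins (wedges wt))"
  shows "remove_basin_edges wt j k = 0"
proof -
  obtain C where C: "C \<in> basins (wedges wt)" "k \<in> C" using assms by blast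
  have "j \<in> C" if "wt j k \<noteq> 0"
  proof (cases "j = k")
    case False
    then have "(k, j) \<in> wedges wt" using that unfolding wedges_def by simp
    then show ?thesis using basin_closed[OF C] by blast
  qed (use C in simp)
  then show ?thesis using C unfolding remove_basin_edges_def by auto
qed

lemma reaches_basin_remove_basin_edges:
  fixes wt :: "'n::finite \<Rightarrow> 'n \<Rightarrow> complex"
  obtains b where "b \<in> \<Union>(basins (wedges wt))" "(x, b) \<in> (wedges (remove_basin_edges wt))\<^sup>*"
proof -
  let ?B = "\<Union>(basins (wedges wt))"
  have "\<exists>b'\<in>?B. (y, b') \<in> (wedges (remove_basin_edges wt))\<^sup>*"
    if "(y, b) \<in> (wedges wt)\<^sup>*" "b \<in> ?B" for y b
    using that
  proof (induction rule: converse_rtrancl_induct)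
    case (step y z)
    show ?case
    proof (cases "y \<in> ?B")
      case False
      then have "(y, z) \<in> wedges (remove_basin_edges wt)"
        using step(1) remove_basin_edges_outside[OF False] unfolding wedges_def by simp
      moreover obtain b' where "b' \<in> ?B" "(z, b') \<in> (wedges (remove_basin_edges wt))\<^sup>*"
        using step.IH[OF step.prems] by blast
      ultimately show ?thesis by (meson converse_rtrancl_into_rtrancl)
    qed blast
  qed blast
  moreover obtain b where "b \<in> ?B" "(x, b) \<in> (wedges wt)\<^sup>*" by (rule reaches_basin)
  ultimately show thesis using that by blast
qed

lemma basin_forest_weight_harmonic:
  fixes w :: "'n::finite \<Rightarrow> 'n \<Rightarrow> complex"
  assumes C: "C \<in> basins (wedges w)"
  shows "harmonic_at w (forest_weight_to (remove_basin_edges w) (\<Union>(basins (wedges w))) C) k"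
proof (cases "k \<in> \<Union>(basins (wedges w))")
  case False
  let ?f = "forest_weight_to (remove_basin_edges w) (\<Union>(basins (wedges w))) C"
  have "C \<subseteq> \<Union>(basins (wedges w))" using C by blast
  then have "harmonic_at (remove_basin_edges w) ?f k"
    using False by (rule forest_weight_to_harmonic)
  moreover have "harmonic_at w ?f k \<longleftrightarrow> harmonic_at (remove_basin_edges w) ?f k"
    by (rule harmonic_at_cong) (simp add: remove_basin_edges_outside[OF False])
  ultimately show ?thesis by simp
next
  case True
  let ?f = "forest_weight_to (remove_basin_edges w) (\<Union>(basins (wedges w))) C"
  obtain D where D: "D \<in> basins (wedges w)" "k \<in> D" using True by blast
  have zero: "w j k * (?f j - ?f k) = 0" for j
  proof (cases "j \<noteq> k \<and> w j k \<noteq> 0")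
    case True
    then have "(k, j) \<in> wedges w" unfolding wedges_def by simp
    then have "j \<in> D" using basin_closed[OF D] by blast
    then have "j \<in> C \<longleftrightarrow> k \<in> C" using basins_disjoint[OF C D(1)] D(2) by blast
    moreover have "j \<in> \<Union>(basins (wedges w))" "k \<in> \<Union>(basins (wedges w))"
      using D \<open>j \<in> D\<close> by blast+
    ultimately have "?f j = ?f k" by (simp add: forest_weight_to_root)
    then show ?thesis by simp
  qed auto
  then show ?thesis unfolding harmonic_at_def by (simp add: zero)
qed

section \<open>The harmonic vectors for nonnegative weights\<close>

locale nonneg_weights =
  fixes w :: "'n::finite \<Rightarrow> 'n \<Rightarrow> complex" and r :: "'n \<Rightarrow> 'n \<Rightarrow> real"
  assumes w_eq_of_real: "\<And>j k. j \<noteq> k \<Longrightarrow> w j k = of_real (r j k)"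
    and r_nonneg: "\<And>j k. 0 \<le> r j k"
begin

abbreviation "B \<equiv> \<Union>(basins (wedges w))"

abbreviation "w' \<equiv> remove_basin_edges w"

definition forest_total_weight :: complex where
  "forest_total_weight = (\<Sum>F\<in>spanning_forests (wedges w') B. forest_weight w' F)"

definition basin_vector :: "'n set \<Rightarrow> complex^'n" where
  "basin_vector C = (\<chi> i. forest_weight_to w' B C i)"

lemma harmonic_at_of_real: "harmonic_at w x k \<longleftrightarrow> harmonic_at (\<lambda>j k. of_real (r j k)) x k"
  by (rule harmonic_at_cong) (simp add: w_eq_of_real)

text \<open>At a vertex where a harmonic function is maximal among its out-neighbours, the harmonic
  mean \<open>\<Sum>j. r j y * (u j - u y) = 0\<close> has only nonpositive terms, so all of them vanish.\<close>
lemma harmonic_max_step: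
  assumes harm: "harmonic_at r u y" and le: "\<And>j. (y, j) \<in> wedges w \<Longrightarrow> u j \<le> u y"
    and yz: "(y, z) \<in> wedges w"
  shows "u z = u y"
proof -
  have edge: "(y, j) \<in> wedges w" if "j \<noteq> y" "r j y \<noteq> 0" for j
    using that w_eq_of_real[of j y] unfolding wedges_def by simp
  have nonneg: "0 \<le> r j y * (u y - u j)" if "j \<in> UNIV - {y}" for j
    using that edge[of j] le[of j] r_nonneg[of j y] by (cases "r j y = 0") auto
  have "(\<Sum>j\<in>UNIV - {y}. r j y * (u y - u j)) = - (\<Sum>j\<in>UNIV - {y}. r j y * (u j - u y))"
    by (simp add: algebra_simps flip: sum_negf)
  then have "(\<Sum>j\<in>UNIV - {y}. r j y * (u y - u j)) = 0"
    using harm unfolding harmonic_at_def by simp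
  then have "\<forall>j\<in>UNIV - {y}. r j y * (u y - u j) = 0"
    using sum_nonneg_eq_0_iff[of "UNIV - {y}" "\<lambda>j. r j y * (u y - u j)"] nonneg by simp
  moreover have "z \<noteq> y" "r z y \<noteq> 0"
    using yz w_eq_of_real[of z y] unfolding wedges_def by auto
  ultimately show ?thesis by auto
qed

lemma harmonic_max_reachable:
  assumes harm: "\<And>k. harmonic_at r u k"
    and closed: "\<And>x y. x \<in> S \<Longrightarrow> (x, y) \<in> wedges w \<Longrightarrow> y \<in> S"
    and max: "\<And>x. x \<in> S \<Longrightarrow> u x \<le> u v" and v: "v \<in> S" and vz: "(v, z) \<in> (wedges w)\<^sup>*"
  shows "u z = u v"
proof -
  have "z \<in> S \<and> u z = u v"
    using vz
  proof (induction rule: rtrancl_induct)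
    case (step y z)
    then have "z \<in> S" using closed by blast
    moreover have "u z = u y"
    proof (rule harmonic_max_step[of u y z])
      show "u j \<le> u y" if "(y, j) \<in> wedges w" for j
        using that step closed max by auto
    qed (use harm step in auto)
    ultimately show ?case using step by simp
  qed (use v in simp)
  then show ?thesis by simp
qed

lemma harmonic_real_constant_on_basin:
  assumes harm: "\<And>k. harmonic_at r u k" and C: "C \<in> basins (wedges w)" and "y \<in> C"
  shows "u y = Max (u ` C)"
proof -
  have "Max (u ` C) \<in> u ` C" using assms(3) by (intro Max_in) auto
  then obtain v where v: "v \<in> C" "u v = Max (u ` C)" by (metis imageE)
  have "u y = u v"
    using harm basin_closed[OF C] v(1) basin_connected[OF C v(1) assms(3)]
    by (intro harmonic_max_reachable[of u C v y]) (auto simp: v(2))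
  then show ?thesis using v(2) by simp
qed

lemma harmonic_real_le_zero:
  assumes harm: "\<And>k. harmonic_at r u k" and zero: "\<And>b. b \<in> B \<Longrightarrow> u b = 0"
  shows "u z \<le> 0"
proof -
  have "Max (range u) \<in> range u" by (intro Max_in) auto
  then obtain v where v: "u v = Max (range u)" by (metis rangeE)
  obtain b where b: "b \<in> B" "(v, b) \<in> (wedges w)\<^sup>*" by (rule reaches_basin)
  have "u b = u v"
    using harm b(2) v by (intro harmonic_max_reachable[of u UNIV v b]) auto
  then have "Max (range u) = 0" using zero[OF b(1)] v by simp
  then show ?thesis using Max_ge[of "range u" "u z"] by simp
qed

lemma harmonic_constant_on_basin:
  assumes harm: "\<And>k. harmonic_at w x k" and C: "C \<in> basins (wedges w)" and "y \<in> C" "z \<in> C"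
  shows "x y = x z"
proof -
  have "\<And>k. harmonic_at r (\<lambda>j. Re (x j)) k" "\<And>k. harmonic_at r (\<lambda>j. Im (x j)) k"
    using harm harmonic_at_of_real harmonic_at_of_real_Re harmonic_at_of_real_Im by blast+
  then have "Re (x y) = Re (x z)" "Im (x y) = Im (x z)"
    using harmonic_real_constant_on_basin[OF _ C] assms(3,4) by metis+
  then show ?thesis by (simp add: complex_eq_iff)
qed

lemma harmonic_zero:
  assumes harm: "\<And>k. harmonic_at w x k" and zero: "\<And>b. b \<in> B \<Longrightarrow> x b = 0"
  shows "x z = 0"
proof -
  have real_case: "u z = 0" if "\<And>k. harmonic_at r u k" "\<And>b. b \<in> B \<Longrightarrow> u b = 0" for u
  proof -
    have "\<And>k. harmonic_at r (\<lambda>j. - u j) k"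
      using that(1) harmonic_at_scale[of r u _ "-1"] by simp
    then have "- u z \<le> 0" using that(2) by (intro harmonic_real_le_zero[of "\<lambda>j. - u j"]) auto
    moreover have "u z \<le> 0" using that by (rule harmonic_real_le_zero)
    ultimately show ?thesis by simp
  qed
  have "\<And>k. harmonic_at r (\<lambda>j. Re (x j)) k" "\<And>k. harmonic_at r (\<lambda>j. Im (x j)) k"
    using harm harmonic_at_of_real harmonic_at_of_real_Re harmonic_at_of_real_Im by blast+
  then have "Re (x z) = 0" "Im (x z) = 0"
    using real_case[of "\<lambda>j. Re (x j)"] real_case[of "\<lambda>j. Im (x j)"] zero by simp_all
  then show ?thesis by (simp add: complex_eq_iff)
qed

lemma edge_weight_remove_basin_edges_pos:
  assumes "(k, j) \<in> wedges w'"
  shows "w' j k = of_real (r j k)" "0 < r j k"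
proof -
  have "j \<noteq> k" "w' j k \<noteq> 0" using assms unfolding wedges_def by auto
  moreover have "k \<notin> B" using remove_basin_edges_inside[of k w j] \<open>w' j k \<noteq> 0\<close> by blast
  ultimately show "w' j k = of_real (r j k)" "0 < r j k"
    using remove_basin_edges_outside[of k w j] w_eq_of_real[of j k] r_nonneg[of j k]
    by (auto simp: order_less_le)
qed

lemma forest_weight_remove_basin_edges:
  assumes "F \<subseteq> wedges w'"
  shows "forest_weight w' F = of_real (\<Prod>(k, j)\<in>F. r j k)" "0 < (\<Prod>(k, j)\<in>F. r j k)"
proof -
  show "forest_weight w' F = of_real (\<Prod>(k, j)\<in>F. r j k)"
    unfolding forest_weight_def of_real_prod
    using assms edge_weight_remove_basin_edges_pos(1) by (intro prod.cong) auto
  show "0 < (\<Prod>(k, j)\<in>F. r j k)"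
    using assms edge_weight_remove_basin_edges_pos(2) by (intro prod_pos) auto
qed

lemma forest_total_weight_nonzero: "forest_total_weight \<noteq> 0"
proof -
  let ?T = "spanning_forests (wedges w') B"
  have sub: "F \<subseteq> wedges w'" if "F \<in> ?T" for F using that unfolding spanning_forests_def by blast
  have "?T \<noteq> {}"
    by (rule spanning_forests_nonempty) (meson reaches_basin_remove_basin_edges)
  then have "0 < (\<Sum>F\<in>?T. \<Prod>(k, j)\<in>F. r j k)"
    using forest_weight_remove_basin_edges(2)[OF sub] by (intro sum_pos) auto
  moreover have "forest_total_weight = of_real (\<Sum>F\<in>?T. \<Prod>(k, j)\<in>F. r j k)"
    unfolding forest_total_weight_def of_real_sum using forest_weight_remove_basin_edges(1)[OF sub] by simp
  ultimately show ?thesis by (metis less_irrefl of_real_eq_0_iff)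
qed

lemma basin_vector_basin_component:
  "i \<in> B \<Longrightarrow> basin_vector C $ i = (if i \<in> C then forest_total_weight else 0)"
  unfolding basin_vector_def forest_total_weight_def by (simp add: forest_weight_to_root)

lemma basin_vector_harmonic:
  assumes "C \<in> basins (wedges w)"
  shows "harmonic_at w (($) (basin_vector C)) k"
proof -
  have "($) (basin_vector C) = forest_weight_to w' B C"
    unfolding basin_vector_def by (simp add: fun_eq_iff)
  then show ?thesis using basin_forest_weight_harmonic[OF assms] by simp
qed

lemma basin_vector_eq:
  assumes "C \<subseteq> B"
  shows "basin_vector C = forest_total_weight *s (\<Sum>j\<in>C. axis j 1) + (\<Sum>l\<in>UNIV - B. forest_weight_to w' B C l *s axis l 1)"
proof -
  have axes: "(\<Sum>j\<in>C. axis j 1) $ i = (if i \<in> C then 1 else 0)" for i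
    by (simp add: sum_component axis_def)
  have "(\<Sum>l\<in>UNIV - B. forest_weight_to w' B C l *s axis l 1) $ i
      = (\<Sum>l\<in>UNIV - B. if i = l then forest_weight_to w' B C l else 0)" for i
    unfolding sum_component by (intro sum.cong) (auto simp: axis_def)
  then have rest: "(\<Sum>l\<in>UNIV - B. forest_weight_to w' B C l *s axis l 1) $ i
      = (if i \<in> B then 0 else forest_weight_to w' B C i)" for i
    by (simp add: sum.delta')
  have "basin_vector C $ i = (if i \<in> B then if i \<in> C then forest_total_weight else 0 else forest_weight_to w' B C i)" for i
    by (simp add: basin_vector_basin_component) (simp add: basin_vector_def)
  then show ?thesis
    using assms unfolding vec_eq_iff vector_add_component vector_smult_component axes rest by auto
qed

lemma sum_basin_vectors_component:
  assumes "C0 \<in> basins (wedges w)" "i \<in> C0"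
  shows "(\<Sum>C\<in>basins (wedges w). c C *s basin_vector C) $ i = c C0 * forest_total_weight"
proof -
  have "i \<in> B" using assms by blast
  then show ?thesis
    unfolding sum_component vector_smult_component basin_vector_basin_component[OF \<open>i \<in> B\<close>]
    using sum_basins_indicator[OF assms] by simp
qed

lemma inj_on_basin_vector: "inj_on basin_vector (basins (wedges w))"
proof (rule inj_onI)
  fix C1 C2 assume C1: "C1 \<in> basins (wedges w)" and C2: "C2 \<in> basins (wedges w)"
    and eq: "basin_vector C1 = basin_vector C2"
  obtain i where i: "i \<in> C1" using basin_nonempty[OF C1] by blast
  then have "i \<in> B" using C1 by blast
  then have "basin_vector C1 $ i = forest_total_weight" using i by (simp add: basin_vector_basin_component)
  then have "basin_vector C2 $ i = forest_total_weight" using eq by simp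
  then have "i \<in> C2"
    using forest_total_weight_nonzero by (simp add: basin_vector_basin_component[OF \<open>i \<in> B\<close>] split: if_splits)
  then show "C1 = C2" using basins_disjoint[OF C1 C2 i] by simp
qed

lemma independent_basin_vectors: "vec.independent (basin_vector ` basins (wedges w))"
proof
  assume "vec.dependent (basin_vector ` basins (wedges w))"
  then obtain u C0 where u: "(\<Sum>v\<in>basin_vector ` basins (wedges w). u v *s v) = 0"
    and C0: "C0 \<in> basins (wedges w)" "u (basin_vector C0) \<noteq> 0"
    using vec.dependent_finite[of "basin_vector ` basins (wedges w)"] by auto
  obtain i where i: "i \<in> C0" using basin_nonempty[OF C0(1)] by blast
  have "(\<Sum>C\<in>basins (wedges w). u (basin_vector C) *s basin_vector C) = 0"
    using u by (simp add: sum.reindex[OF inj_on_basin_vector])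
  then have "u (basin_vector C0) * forest_total_weight = 0"
    using sum_basin_vectors_component[OF C0(1) i, of "\<lambda>C. u (basin_vector C)"] by simp
  then show False using C0(2) forest_total_weight_nonzero by simp
qed

lemma harmonic_eq_span_basin_vectors:
  "{x. \<forall>k. harmonic_at w (($) x) k} = vec.span (basin_vector ` basins (wedges w))"
proof
  show span: "vec.span (basin_vector ` basins (wedges w)) \<subseteq> {x. \<forall>k. harmonic_at w (($) x) k}"
    by (rule vec.span_minimal) (auto simp: basin_vector_harmonic subspace_harmonic)
  show "{x. \<forall>k. harmonic_at w (($) x) k} \<subseteq> vec.span (basin_vector ` basins (wedges w))"
  proof
    fix x assume x: "x \<in> {x. \<forall>k. harmonic_at w (($) x) k}"
    define rep where "rep C = (SOME i. i \<in> C)" for C :: "'n set"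
    have rep: "rep C \<in> C" if "C \<in> basins (wedges w)" for C
      using basin_nonempty[OF that] unfolding rep_def by (simp add: some_in_eq)
    define s where "s = (\<Sum>C\<in>basins (wedges w). (x $ rep C / forest_total_weight) *s basin_vector C)"
    have s: "s \<in> vec.span (basin_vector ` basins (wedges w))"
      unfolding s_def by (intro vec.span_sum vec.span_scale vec.span_base) auto
    have "x - s \<in> {x. \<forall>k. harmonic_at w (($) x) k}"
      using s span x by (intro vec.subspace_diff[OF subspace_harmonic]) auto
    moreover have "(x - s) $ i = 0" if "i \<in> B" for i
    proof -
      obtain C0 where C0: "C0 \<in> basins (wedges w)" "i \<in> C0" using \<open>i \<in> B\<close> by blast
      have "s $ i = x $ rep C0"
        unfolding s_def using sum_basin_vectors_component[OF C0, of "\<lambda>C. x $ rep C / forest_total_weight"] forest_total_weight_nonzero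
        by simp
      also have "\<dots> = x $ i"
        using harmonic_constant_on_basin[OF _ C0(1) rep[OF C0(1)] C0(2)] x by simp
      finally show ?thesis by simp
    qed
    ultimately have "x - s = 0" using harmonic_zero[of "($) (x - s)"] by (simp add: vec_eq_iff)
    then show "x \<in> vec.span (basin_vector ` basins (wedges w))" using s by simp
  qed
qed

end

section \<open>Sandwiches between orthogonal projectors\<close>

lemma cnj_transpose_mult: "cnj_transpose (A ** B) = cnj_transpose B ** cnj_transpose A"
  unfolding cnj_transpose_def by (simp add: vec_eq_iff matrix_matrix_mult_def cnj_sum mult.commute)

lemma trace_mult_cnj_transpose:
  "trace (A ** cnj_transpose A) = of_real (\<Sum>i\<in>UNIV. \<Sum>i'\<in>UNIV. (cmod (A $ i $ i'))\<^sup>2)"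
  unfolding trace_def cnj_transpose_def of_real_sum complex_norm_square
  by (simp add: matrix_matrix_mult_def)

lemma trace_projector_sandwich:
  fixes P Q A :: "complex^'n^'n"
  assumes P: "P ** P = P" "cnj_transpose P = P" and Q: "Q ** Q = Q" "cnj_transpose Q = Q"
  shows "trace (P ** A ** Q ** cnj_transpose A) = of_real (\<Sum>i\<in>UNIV. \<Sum>i'\<in>UNIV. (cmod ((P ** A ** Q) $ i $ i'))\<^sup>2)"
proof -
  have PP: "P ** (P ** X) = P ** X" and QQ: "Q ** (Q ** X) = Q ** X" for X
    using P(1) Q(1) by (metis matrix_mul_assoc)+
  have "cnj_transpose (P ** A ** Q) = Q ** (cnj_transpose A ** P)"
    by (simp add: cnj_transpose_mult P(2) Q(2))
  then have "trace ((P ** A ** Q) ** cnj_transpose (P ** A ** Q)) = trace (P ** (A ** (Q ** (cnj_transpose A ** P))))"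
    by (simp add: matrix_mul_assoc[symmetric] QQ)
  also have "\<dots> = trace ((P ** (A ** (Q ** cnj_transpose A))) ** P)"
    by (simp add: matrix_mul_assoc[symmetric])
  also have "\<dots> = trace (P ** (P ** (A ** (Q ** cnj_transpose A))))"
    by (rule trace_mul_sym)
  also have "\<dots> = trace (P ** A ** Q ** cnj_transpose A)"
    by (simp add: PP matrix_mul_assoc[symmetric])
  finally show ?thesis by (simp add: trace_mult_cnj_transpose)
qed

theorem mainTheorem5:
  fixes L :: "nat \<Rightarrow> complex^'n^'n" and N :: nat
    and \<pi> :: "'n \<Rightarrow> complex^'n^'n"
    and w :: "'n \<Rightarrow> 'n \<Rightarrow> complex" and \<Omega> :: "complex^'n^'n"
    and \<kappa> :: "'n set \<Rightarrow> complex^'n"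
  assumes proj: "\<And>j. rank_one_orth_proj (\<pi> j)"
    and orth: "\<And>j k. j \<noteq> k \<Longrightarrow> \<pi> j ** \<pi> k = 0"
    and w_def: "\<And>j k. j \<noteq> k \<Longrightarrow> w j k = (\<Sum>\<alpha><N. trace (\<pi> j ** L \<alpha> ** \<pi> k ** cnj_transpose (L \<alpha>)))"
    and Omega_def: "\<Omega> = (\<chi> j k. if j = k then - (\<Sum>l\<in>UNIV - {k}. w l k) else w j k)"
    and kappa_def: "\<And>Neta. \<kappa> Neta =
      (\<Sum>\<tau>\<in>spanning_forests (wedges (remove_basin_edges w)) (\<Union>(basins (wedges w))).
          forest_weight (remove_basin_edges w) \<tau>) *s (\<Sum>j\<in>Neta. axis j 1)
      + (\<Sum>l\<in>UNIV - \<Union>(basins (wedges w)).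
          (\<Sum>\<tau>\<in>spanning_forests_to (wedges (remove_basin_edges w)) (\<Union>(basins (wedges w))) Neta l.
              forest_weight (remove_basin_edges w) \<tau>) *s axis l 1)"
  shows "{x. transpose \<Omega> *v x = 0} = vec.span (\<kappa> ` basins (wedges w))
         \<and> vec.independent (\<kappa> ` basins (wedges w))
         \<and> inj_on \<kappa> (basins (wedges w))"
proof -
  define r where "r j k = (\<Sum>\<alpha><N. \<Sum>i\<in>UNIV. \<Sum>i'\<in>UNIV. (cmod ((\<pi> j ** L \<alpha> ** \<pi> k) $ i $ i'))\<^sup>2)" for j k
  have "w j k = of_real (r j k)" if "j \<noteq> k" for j k
    using proj[of j] proj[of k]
    unfolding w_def[OF that] r_def of_real_sum rank_one_orth_proj_def
    by (simp add: trace_projector_sandwich)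
  then interpret nonneg_weights w r
    by unfold_locales (simp_all add: r_def sum_nonneg)
  have "\<kappa> C = basin_vector C" if "C \<in> basins (wedges w)" for C
  proof -
    have "C \<subseteq> B" using that by blast
    then show ?thesis
      using basin_vector_eq unfolding kappa_def forest_total_weight_def forest_weight_to_def by simp
  qed
  moreover have "{x. transpose \<Omega> *v x = 0} = {x. \<forall>k. harmonic_at w (($) x) k}"
    using transpose_generator_mult_eq_0_iff[OF Omega_def] by blast
  ultimately show ?thesis
    using harmonic_eq_span_basin_vectors independent_basin_vectors inj_on_basin_vector
    by (simp cong: image_cong inj_on_cong)
qed

end
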